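(* Let $0<m<M$ and let $A,B\in\mathbb{P}_n^+$ satisfy $mI\le A\le MI$ and $mI\le B\le MI$. If $f:[0,\infty)\to[0,\infty)$ is a differentiable convex function with $f(0)=0$, then (i) $(\det f(A))^{1/n}+(\det f(B))^{1/n}\le \frac{f(M)}{M}(\det(A+B))^{1/n}$; (ii) $\frac{f(m)}{m}\big((\det A)^{1/n}+(\det B)^{1/n}\big)\le (\det(f(A)+f(B)))^{1/n}$. If $f:[0,\infty)\to[0,\infty)$ is a differentiable concave function with $f(0)=0$, then (iii) $(\det f(A))^{1/n}+(\det f(B))^{1/n}\le \frac{f(m)}{m}(\det(A+B))^{1/n}$; (iv) $\frac{f(M)}{M}\big((\det A)^{1/n}+(\det B)^{1/n}\big)\le (\det(f(A)+f(B)))^{1/n}$.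
   Context: $\mathbb{P}_n^+$ denotes the set of $n\times n$ complex positive definite matrices, $I$ is the identity matrix, $\le$ is the Löwner order, and $f(A)$ is defined by functional calculus. *)

theory Defs
  imports "HOL-Analysis.Analysis"
begin

text \<open>Complex n x n matrices are represented as complex^'n^'n; n = CARD('n).\<close>

definition cadj :: "complex^'n^'n \<Rightarrow> complex^'n^'n" where
  "cadj A = (\<chi> i j. cnj (A $ j $ i))"

definition hermitian_mat :: "complex^'n^'n \<Rightarrow> bool" where
  "hermitian_mat A \<longleftrightarrow> cadj A = A"

definition unitary_mat :: "complex^'n^'n \<Rightarrow> bool" where
  "unitary_mat U \<longleftrightarrow> U ** cadj U = mat 1 \<and> cadj U ** U = mat 1"

definition diag_mat :: "('n \<Rightarrow> complex) \<Rightarrow> complex^'n^'n" where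
  "diag_mat d = (\<chi> i j. if i = j then d i else 0)"

definition qform :: "complex^'n^'n \<Rightarrow> complex^'n \<Rightarrow> complex" where
  "qform A x = (\<Sum>i\<in>UNIV. cnj (x $ i) * (A *v x) $ i)"

definition psd_mat :: "complex^'n^'n \<Rightarrow> bool" where
  "psd_mat A \<longleftrightarrow> hermitian_mat A \<and> (\<forall>x. 0 \<le> Re (qform A x))"

definition pd_mat :: "complex^'n^'n \<Rightarrow> bool" where
  "pd_mat A \<longleftrightarrow> hermitian_mat A \<and> (\<forall>x. x \<noteq> 0 \<longrightarrow> 0 < Re (qform A x))"

definition loewner_le :: "complex^'n^'n \<Rightarrow> complex^'n^'n \<Rightarrow> bool" where
  "loewner_le A B \<longleftrightarrow> psd_mat (B - A)"

text \<open>Functional calculus for Hermitian matrices: if A = U diag(\<lambda>) U^* with U unitary and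
  \<lambda> real, then f(A) = U diag(f(\<lambda>)) U^* (independent of the chosen diagonalization).\<close>
definition mat_fun :: "(real \<Rightarrow> real) \<Rightarrow> complex^'n^'n \<Rightarrow> complex^'n^'n" where
  "mat_fun f A = (let (U, d) = (SOME (U, d). unitary_mat U \<and> (\<forall>i. d i \<in> \<real>) \<and>
                                   A = U ** diag_mat d ** cadj U)
                  in U ** diag_mat (\<lambda>i. complex_of_real (f (Re (d i)))) ** cadj U)"

text \<open>(det X)^{1/n}, for matrices with nonnegative real determinant.\<close>
definition det_root :: "complex^'n^'n \<Rightarrow> real" where
  "det_root X = Re (det X) powr (1 / real CARD('n))"

end

theory Submission
  imports Defs
begin

text \<open>Diagonalize \<open>A = U diag(a) U\<^sup>*\<close> with every \<open>a\<^sub>i \<in> [m, M]\<close>; then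
  \<open>f(A) = U diag(f(a)) U\<^sup>*\<close> and \<open>(det f(A))\<^sup>1\<^sup>/\<^sup>n\<close> is the geometric mean of the \<open>f(a\<^sub>i)\<close>.
  For convex \<open>f\<close> with \<open>f(0) = 0\<close> the ratio \<open>f(x)/x\<close> is nondecreasing, so
  \<open>f(m)/m \<cdot> x \<le> f(x) \<le> f(M)/M \<cdot> x\<close> on \<open>[m, M]\<close> (reversed for concave \<open>f\<close>), and the geometric
  mean is monotone and positively homogeneous. Both inequalities thereby reduce to Minkowski's
  determinant inequality \<open>(det X)\<^sup>1\<^sup>/\<^sup>n + (det Y)\<^sup>1\<^sup>/\<^sup>n \<le> (det (X + Y))\<^sup>1\<^sup>/\<^sup>n\<close> for \<open>X\<close> positive
  definite and \<open>Y\<close> positive semidefinite. Writing \<open>X = S S\<^sup>*\<close> and \<open>Y = S C S\<^sup>*\<close>, it becomes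
  \<open>1 + (det C)\<^sup>1\<^sup>/\<^sup>n \<le> (det (I + C))\<^sup>1\<^sup>/\<^sup>n\<close>, which is AM-GM applied to the eigenvalues of \<open>C\<close>.
  The spectral theorem itself is obtained by maximizing the quadratic form over the unit
  vectors of an invariant subspace.\<close>

definition cinner :: "complex^'n \<Rightarrow> complex^'n \<Rightarrow> complex" where
  "cinner x y = (\<Sum>i\<in>UNIV. cnj (x $ i) * y $ i)"

lemma qform_eq_cinner: "qform A x = cinner x (A *v x)"
  by (simp add: qform_def cinner_def)

lemma cinner_add_right: "cinner x (y + z) = cinner x y + cinner x z"
  by (simp add: cinner_def distrib_left sum.distrib)

lemma cinner_scaleR_left: "cinner (c *\<^sub>R x) y = of_real c * cinner x y"
  unfolding cinner_def vector_scaleR_component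
  by (simp add: scaleR_conv_of_real sum_distrib_left mult.assoc)

lemma cinner_scaleR_right: "cinner x (c *\<^sub>R y) = of_real c * cinner x y"
  unfolding cinner_def vector_scaleR_component
  by (simp add: scaleR_conv_of_real sum_distrib_left mult.left_commute)

lemma cinner_smult_left: "cinner (c *s x) y = cnj c * cinner x y"
  by (simp add: cinner_def sum_distrib_left algebra_simps)

lemma cinner_zero_right [simp]: "cinner x 0 = 0"
  by (simp add: cinner_def)

lemma cnj_cinner: "cnj (cinner x y) = cinner y x"
  by (simp add: cinner_def mult.commute)

lemma cinner_self: "cinner x x = of_real ((norm x)\<^sup>2)"
proof -
  have "cnj (x $ i) * x $ i = of_real ((norm (x $ i))\<^sup>2)" for i
    unfolding complex_norm_square by (rule mult.commute)
  moreover have "(norm x)\<^sup>2 = (\<Sum>i\<in>UNIV. (norm (x $ i))\<^sup>2)"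
    by (simp add: norm_vec_def L2_set_def sum_nonneg)
  ultimately show ?thesis
    by (simp add: cinner_def)
qed

lemma inner_eq_Re_cinner: "inner x y = Re (cinner x y)"
  by (simp add: inner_vec_def cinner_def Re_sum inner_complex_def)

lemma continuous_on_cinner_right: "continuous_on S (cinner v)"
  unfolding cinner_def by (intro continuous_intros)

lemma continuous_on_qform: "continuous_on S (qform A)"
  unfolding qform_def matrix_vector_mult_def by (intro continuous_intros)

lemma cadj_cadj [simp]: "cadj (cadj A) = A"
  by (simp add: cadj_def vec_eq_iff)

lemma cadj_add: "cadj (A + B) = cadj A + cadj B"
  by (simp add: cadj_def vec_eq_iff)

lemma cadj_mult: "cadj (A ** B) = cadj B ** cadj A"
  by (simp add: cadj_def vec_eq_iff matrix_matrix_mult_def mult.commute)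

lemma cadj_mat [simp]: "cadj (mat c) = mat (cnj c)"
  by (simp add: cadj_def vec_eq_iff mat_def)

lemma cadj_diag_mat: "cadj (diag_mat d) = diag_mat (\<lambda>i. cnj (d i))"
  by (simp add: cadj_def vec_eq_iff diag_mat_def)

lemma cinner_mult_vec_right: "cinner x (A *v y) = cinner (cadj A *v x) y"
proof -
  have "cinner x (A *v y) = (\<Sum>i\<in>UNIV. \<Sum>j\<in>UNIV. cnj (x$i) * (A$i$j * y$j))"
    by (simp add: cinner_def matrix_vector_mult_def sum_distrib_left)
  also have "\<dots> = (\<Sum>j\<in>UNIV. \<Sum>i\<in>UNIV. cnj (x$i) * (A$i$j * y$j))"
    by (rule sum.swap)
  also have "\<dots> = cinner (cadj A *v x) y"
    by (simp add: cinner_def matrix_vector_mult_def cadj_def cnj_sum sum_distrib_right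
        mult.assoc mult.left_commute)
  finally show ?thesis .
qed

lemma cinner_hermitian: "hermitian_mat A \<Longrightarrow> cinner x (A *v y) = cinner (A *v x) y"
  using cinner_mult_vec_right[of x A y] by (simp add: hermitian_mat_def)

lemma qform_congruence: "qform A (cadj P *v x) = qform (P ** A ** cadj P) x"
proof -
  have "qform A (cadj P *v x) = cinner x (P *v (A *v (cadj P *v x)))"
    by (simp add: qform_eq_cinner cinner_mult_vec_right[of x P])
  then show ?thesis
    by (simp add: qform_eq_cinner matrix_vector_mul_assoc matrix_mul_assoc)
qed

lemma matrix_add_rdistrib: "(A + B) ** C = A ** C + B ** C"
  by (simp add: matrix_matrix_mult_def vec_eq_iff distrib_right sum.distrib)

lemma mult_vec_scaleR: "A *v (c *\<^sub>R x) = c *\<^sub>R (A *v (x::complex^'n))"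
  by (simp add: vec_eq_iff matrix_vector_mult_def vector_scaleR_component scaleR_sum_right)

lemma qform_add: "qform (A + B) x = qform A x + qform B x"
  by (simp add: qform_eq_cinner matrix_vector_mult_add_rdistrib cinner_add_right)

lemma qform_scaleR: "qform A (c *\<^sub>R x) = of_real (c\<^sup>2) * qform A x"
  by (simp add: qform_eq_cinner cinner_scaleR_left cinner_scaleR_right mult_vec_scaleR
      power2_eq_square)

section \<open>Spectral theorem for Hermitian matrices\<close>

lemma exists_unit_cinner_orthogonal:
  fixes S :: "(complex^'n) set"
  assumes "finite S" and "card S < CARD('n)"
  obtains x where "norm x = 1" and "\<And>v. v \<in> S \<Longrightarrow> cinner v x = 0"
proof -
  \<comment> \<open>Complex orthogonality to \<open>S\<close> is real orthogonality to \<open>S\<close> and \<open>\<i> S\<close>.\<close>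
  define T where "T = S \<union> (\<lambda>v. \<i> *s v) ` S"
  have "card T \<le> card S + card S"
    unfolding T_def by (rule order_trans[OF card_Un_le]) (simp add: card_image_le assms(1))
  then have "dim T < DIM(complex^'n)"
    using dim_le_card'[of T] assms by (simp add: T_def)
  then obtain y :: "complex^'n" where "y \<noteq> 0" and y: "\<And>w. w \<in> span T \<Longrightarrow> orthogonal y w"
    by (elim orthogonal_to_subspace_exists) blast
  have "cinner v y = 0" if "v \<in> S" for v
  proof -
    have "v \<in> span T" "\<i> *s v \<in> span T"
      using that by (auto simp: T_def intro: span_base)
    then have "inner v y = 0" "inner (\<i> *s v) y = 0"
      using y by (metis orthogonal_def inner_commute)+
    then show ?thesis
      by (simp add: inner_eq_Re_cinner cinner_smult_left complex_eq_iff)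
  qed
  with \<open>y \<noteq> 0\<close> show ?thesis
    by (intro that[of "(1 / norm y) *\<^sub>R y"]) (simp_all add: cinner_scaleR_right)
qed

lemma nonpos_if_linear_plus_quadratic_nonpos:
  fixes a b :: real
  assumes "\<And>t. 0 < t \<Longrightarrow> a * t + b * t\<^sup>2 \<le> 0"
  shows "a \<le> 0"
proof (rule ccontr)
  assume "\<not> a \<le> 0"
  define t where "t = a / (\<bar>b\<bar> + 1)"
  have "0 < t"
    using \<open>\<not> a \<le> 0\<close> by (simp add: t_def)
  have "t * (\<bar>b\<bar> + 1) = a"
    by (simp add: t_def)
  then have "a * t = \<bar>b\<bar> * t\<^sup>2 + t\<^sup>2"
    by (auto simp: power2_eq_square algebra_simps)
  moreover have "- \<bar>b\<bar> * t\<^sup>2 \<le> b * t\<^sup>2"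
    by (intro mult_right_mono) auto
  moreover have "0 < t\<^sup>2"
    using \<open>0 < t\<close> by simp
  ultimately have "0 < a * t + b * t\<^sup>2"
    by linarith
  with assms[OF \<open>0 < t\<close>] show False
    by simp
qed

lemma inner_hermitian: "hermitian_mat A \<Longrightarrow> inner x (A *v y) = inner (A *v x) y"
  by (simp add: inner_eq_Re_cinner cinner_hermitian)

lemma Re_qform_eq_inner: "Re (qform A x) = inner x (A *v x)"
  by (simp add: inner_eq_Re_cinner qform_eq_cinner)

lemma hermitian_qform_max_imp_eigenvector:
  fixes A :: "complex^'n^'n"
  assumes herm: "hermitian_mat A" and W: "subspace W" and inv: "\<And>z. z \<in> W \<Longrightarrow> A *v z \<in> W"
    and "x \<in> W" and "norm x = 1"
    and max: "\<And>z. z \<in> W \<Longrightarrow> Re (qform A z) \<le> Re (qform A x) * (norm z)\<^sup>2"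
  shows "A *v x = Re (qform A x) *\<^sub>R x"
proof -
  define l where "l = Re (qform A x)"
  define y where "y = A *v x - l *\<^sub>R x"
  define q where "q z = inner z (A *v z) - l * inner z z" for z
  have "y \<in> W"
    unfolding y_def using W inv \<open>x \<in> W\<close> by (intro subspace_diff subspace_scale) auto
  have q_nonpos: "q z \<le> 0" if "z \<in> W" for z
    using max[OF that] by (simp add: q_def l_def Re_qform_eq_inner power2_norm_eq_inner)
  have "q x = 0"
    using \<open>norm x = 1\<close> by (simp add: q_def l_def Re_qform_eq_inner flip: power2_norm_eq_inner)
  \<comment> \<open>\<open>q\<close> attains its maximum 0 on \<open>W\<close> at \<open>x\<close>, so the slope \<open>2 \<parallel>y\<parallel>\<^sup>2\<close> of \<open>q\<close> at \<open>x\<close> in direction \<open>y\<close> vanishes.\<close>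
  have expand: "q (x + t *\<^sub>R y) = q x + 2 * inner y y * t + q y * t\<^sup>2" for t
  proof -
    have e1: "inner (x + t *\<^sub>R y) (A *v (x + t *\<^sub>R y))
        = inner x (A *v x) + 2 * t * inner (A *v x) y + t\<^sup>2 * inner y (A *v y)"
      by (simp add: matrix_vector_right_distrib mult_vec_scaleR inner_add_left inner_add_right
          inner_hermitian[OF herm, of x y] inner_commute[of y x] inner_commute[of y "A *v x"]
          power2_eq_square algebra_simps)
    have e2: "inner (x + t *\<^sub>R y) (x + t *\<^sub>R y)
        = inner x x + 2 * t * inner x y + t\<^sup>2 * inner y y"
      by (simp add: inner_add_left inner_add_right inner_commute[of y x] power2_eq_square algebra_simps)
    have "inner y y = inner (A *v x - l *\<^sub>R x) y"
      by (simp only: flip: y_def)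
    then have e3: "inner (A *v x) y - l * inner x y = inner y y"
      by (simp add: inner_diff_left)
    show ?thesis
      unfolding q_def by (simp only: e1 e2 flip: e3) (simp add: algebra_simps power2_eq_square)
  qed
  have "2 * inner y y * t + q y * t\<^sup>2 \<le> 0" for t
  proof -
    have "x + t *\<^sub>R y \<in> W"
      using W \<open>x \<in> W\<close> \<open>y \<in> W\<close> by (intro subspace_add subspace_scale)
    then show ?thesis
      using q_nonpos expand[of t] \<open>q x = 0\<close> by fastforce
  qed
  then have "2 * inner y y \<le> 0"
    by (rule nonpos_if_linear_plus_quadratic_nonpos)
  then have "y = 0"
    using inner_ge_zero[of y] by simp
  then show ?thesis
    by (simp add: y_def l_def)
qed

lemma hermitian_eigenvector_orthogonal:
  fixes A :: "complex^'n^'n"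
  assumes herm: "hermitian_mat A" and "finite S" and "card S < CARD('n)"
    and eig: "\<And>v. v \<in> S \<Longrightarrow> \<exists>l. A *v v = l *\<^sub>R v"
  obtains x l where "norm x = 1" and "\<And>v. v \<in> S \<Longrightarrow> cinner v x = 0" and "A *v x = l *\<^sub>R x"
proof -
  define W where "W = {x. \<forall>v\<in>S. cinner v x = 0}"
  have W: "subspace W"
    by (auto simp: subspace_def W_def cinner_add_right cinner_scaleR_right)
  have inv: "A *v z \<in> W" if "z \<in> W" for z
  proof -
    have "cinner v (A *v z) = 0" if "v \<in> S" for v
    proof -
      obtain l where "A *v v = l *\<^sub>R v"
        using eig[OF \<open>v \<in> S\<close>] by blast
      then show ?thesis
        using cinner_hermitian[OF herm, of v z] \<open>z \<in> W\<close> \<open>v \<in> S\<close>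
        by (simp add: W_def cinner_scaleR_left)
    qed
    then show ?thesis
      by (simp add: W_def)
  qed
  have "closed W"
  proof -
    have "W = (\<Inter>v\<in>S. {x. cinner v x = 0})"
      by (auto simp: W_def)
    moreover have "closed {x. cinner v x = 0}" for v
      by (intro closed_Collect_eq continuous_on_cinner_right continuous_on_const)
    ultimately show ?thesis
      by auto
  qed
  define K where "K = W \<inter> sphere 0 1"
  have "compact K"
    unfolding K_def using \<open>closed W\<close> by (intro closed_Int_compact) auto
  moreover have "K \<noteq> {}"
  proof -
    obtain y where "norm y = 1" and "\<And>v. v \<in> S \<Longrightarrow> cinner v y = 0"
      using exists_unit_cinner_orthogonal[OF \<open>finite S\<close> \<open>card S < CARD('n)\<close>] by blast
    then have "y \<in> K"
      by (simp add: K_def W_def)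
    then show ?thesis
      by blast
  qed
  moreover have "continuous_on K (\<lambda>z. Re (qform A z))"
    by (intro continuous_intros continuous_on_qform)
  ultimately obtain x where "x \<in> K" and x_max: "\<And>z. z \<in> K \<Longrightarrow> Re (qform A z) \<le> Re (qform A x)"
    using continuous_attains_sup by metis
  have "Re (qform A z) \<le> Re (qform A x) * (norm z)\<^sup>2" if "z \<in> W" for z
  proof (cases "z = 0")
    case True
    then show ?thesis
      by (simp add: qform_def)
  next
    case False
    have "(1 / norm z) *\<^sub>R z \<in> K"
      using W \<open>z \<in> W\<close> False by (simp add: K_def subspace_scale)
    then have "Re (qform A z) / (norm z)\<^sup>2 \<le> Re (qform A x)"
      by (auto dest!: x_max simp: qform_scaleR power_divide)
    with False show ?thesis
      by (simp add: divide_le_eq)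
  qed
  then have "A *v x = Re (qform A x) *\<^sub>R x"
    using \<open>x \<in> K\<close> by (intro hermitian_qform_max_imp_eigenvector[OF herm W inv]) (auto simp: K_def)
  with \<open>x \<in> K\<close> show ?thesis
    by (intro that) (auto simp: K_def W_def)
qed

lemma hermitian_orthonormal_eigenvectors:
  fixes A :: "complex^'n^'n"
  assumes herm: "hermitian_mat A"
  shows "k \<le> CARD('n) \<Longrightarrow> \<exists>S. finite S \<and> card S = k \<and>
           (\<forall>v\<in>S. norm v = 1 \<and> (\<exists>l. A *v v = l *\<^sub>R v)) \<and>
           (\<forall>v\<in>S. \<forall>w\<in>S. v \<noteq> w \<longrightarrow> cinner v w = 0)"
proof (induction k)
  case 0
  show ?case
    by (intro exI[of _ "{}"]) auto
next
  case (Suc k)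
  then obtain S where "finite S" "card S = k"
    and S_eig: "\<forall>v\<in>S. norm v = 1 \<and> (\<exists>l. A *v v = l *\<^sub>R v)"
    and S_orth: "\<forall>v\<in>S. \<forall>w\<in>S. v \<noteq> w \<longrightarrow> cinner v w = 0"
    by auto
  with Suc.prems obtain x l where "norm x = 1" and x_orth: "\<And>v. v \<in> S \<Longrightarrow> cinner v x = 0"
    and "A *v x = l *\<^sub>R x"
    by (elim hermitian_eigenvector_orthogonal[OF herm]) auto
  have "x \<notin> S"
    using x_orth \<open>norm x = 1\<close> by (force simp: cinner_self)
  moreover have "cinner x v = 0" if "v \<in> S" for v
    using x_orth[OF that] cnj_cinner[of v x] by simp
  ultimately show ?case
    using \<open>finite S\<close> \<open>card S = k\<close> S_eig S_orth x_orth \<open>norm x = 1\<close> \<open>A *v x = l *\<^sub>R x\<close>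
    by (intro exI[of _ "insert x S"]) auto
qed

lemma unitary_of_orthonormal_columns:
  fixes h :: "'n \<Rightarrow> complex^'n"
  assumes "\<And>i j. cinner (h i) (h j) = (if i = j then 1 else 0)"
  shows "unitary_mat (\<chi> i j. h j $ i)"
proof -
  let ?U = "\<chi> i j. h j $ i"
  have "(cadj ?U ** ?U) $ i $ j = cinner (h i) (h j)" for i j
    by (simp add: cadj_def matrix_matrix_mult_def cinner_def)
  then have "cadj ?U ** ?U = mat 1"
    by (simp add: vec_eq_iff mat_def assms)
  moreover from this have "?U ** cadj ?U = mat 1"
    by (rule matrix_left_right_inverse1)
  ultimately show ?thesis
    by (simp add: unitary_mat_def)
qed

lemma matrix_mult_eigenvector_columns:
  fixes h :: "'n \<Rightarrow> complex^'n"
  assumes "\<And>j. A *v h j = a j *\<^sub>R h j"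
  shows "A ** (\<chi> i j. h j $ i) = (\<chi> i j. h j $ i) ** diag_mat (\<lambda>j. complex_of_real (a j))"
proof -
  have "(A ** (\<chi> i j. h j $ i)) $ i $ j = (A *v h j) $ i" for i j
    by (simp add: matrix_matrix_mult_def matrix_vector_mult_def)
  moreover have "((\<chi> i j. h j $ i) ** diag_mat (\<lambda>j. complex_of_real (a j))) $ i $ j
      = complex_of_real (a j) * h j $ i" for i j
  proof -
    have "(\<Sum>k\<in>UNIV. h k $ i * (if k = j then complex_of_real (a k) else 0))
        = (\<Sum>k\<in>UNIV. if k = j then complex_of_real (a j) * h j $ i else 0)"
      by (intro sum.cong) auto
    then show ?thesis
      by (simp add: matrix_matrix_mult_def diag_mat_def)
  qed
  ultimately show ?thesis
    using assms by (simp add: vec_eq_iff) (simp add: scaleR_conv_of_real)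
qed

definition udiag :: "complex^'n^'n \<Rightarrow> ('n \<Rightarrow> real) \<Rightarrow> complex^'n^'n" where
  "udiag U a = U ** diag_mat (\<lambda>i. complex_of_real (a i)) ** cadj U"

theorem hermitian_spectral:
  fixes A :: "complex^'n^'n"
  assumes "hermitian_mat A"
  obtains U a where "unitary_mat U" and "A = udiag U a"
proof -
  obtain S where "finite S" "card S = CARD('n)"
    and S_eig: "\<forall>v\<in>S. norm v = 1 \<and> (\<exists>l. A *v v = l *\<^sub>R v)"
    and S_orth: "\<forall>v\<in>S. \<forall>w\<in>S. v \<noteq> w \<longrightarrow> cinner v w = 0"
    using hermitian_orthonormal_eigenvectors[OF assms order.refl] by blast
  then obtain h :: "'n \<Rightarrow> complex^'n" where "bij_betw h UNIV S"
    using finite_same_card_bij[of "UNIV :: 'n set" S] by auto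
  then have "h j \<in> S" and "inj h" for j
    by (auto simp: bij_betw_def)
  define a where "a j = (SOME l. A *v h j = l *\<^sub>R h j)" for j
  have "A *v h j = a j *\<^sub>R h j" for j
    unfolding a_def using S_eig \<open>h j \<in> S\<close> by (metis (mono_tags) someI_ex)
  then have AU: "A ** (\<chi> i j. h j $ i) = (\<chi> i j. h j $ i) ** diag_mat (\<lambda>j. complex_of_real (a j))"
    by (rule matrix_mult_eigenvector_columns)
  have "cinner (h i) (h j) = (if i = j then 1 else 0)" for i j
    using S_eig S_orth \<open>\<And>j. h j \<in> S\<close> \<open>inj h\<close> by (auto simp: cinner_self inj_eq)
  then have U: "unitary_mat (\<chi> i j. h j $ i)"
    by (rule unitary_of_orthonormal_columns)
  then have "A = A ** ((\<chi> i j. h j $ i) ** cadj (\<chi> i j. h j $ i))"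
    by (simp add: unitary_mat_def)
  also have "\<dots> = udiag (\<chi> i j. h j $ i) a"
    by (simp only: udiag_def matrix_mul_assoc AU)
  finally show ?thesis
    using U that by blast
qed

section \<open>Unitarily diagonalized matrices\<close>

lemma hermitian_udiag: "hermitian_mat (udiag U a)"
  by (simp add: hermitian_mat_def udiag_def cadj_mult cadj_diag_mat matrix_mul_assoc)

lemma qform_diag_mat: "qform (diag_mat d) x = (\<Sum>k\<in>UNIV. d k * of_real ((norm (x $ k))\<^sup>2))"
proof -
  have mult: "(diag_mat d *v x) $ k = d k * x $ k" for k
  proof -
    have "(\<Sum>j\<in>UNIV. (if k = j then d k else 0) * x $ j) = (\<Sum>j\<in>UNIV. if j = k then d k * x $ k else 0)"
      by (intro sum.cong) auto
    then show ?thesis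
      by (simp add: matrix_vector_mult_def diag_mat_def)
  qed
  moreover have norm: "cnj (x $ k) * (d k * x $ k) = d k * of_real ((norm (x $ k))\<^sup>2)" for k
  proof -
    have "cnj (x $ k) * x $ k = of_real ((norm (x $ k))\<^sup>2)"
      unfolding complex_norm_square by (rule mult.commute)
    then show ?thesis
      by (metis mult.left_commute)
  qed
  ultimately show ?thesis
    by (simp only: qform_def mult norm)
qed

lemma qform_udiag:
  "qform (udiag U a) z = of_real (\<Sum>k\<in>UNIV. a k * (norm ((cadj U *v z) $ k))\<^sup>2)"
  using qform_congruence[of "diag_mat (\<lambda>i. complex_of_real (a i))" U z]
  by (simp add: udiag_def qform_diag_mat)

lemma unitary_cadj_mult_column:
  assumes "unitary_mat U"
  shows "cadj U *v (U *v axis i 1) = axis i 1"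
  using assms by (simp add: matrix_vector_mul_assoc unitary_mat_def)

lemma qform_udiag_column:
  assumes "unitary_mat U"
  shows "qform (udiag U a) (U *v axis i 1) = of_real (a i)"
proof -
  have "(\<Sum>k\<in>UNIV. a k * (norm (axis i (1::complex) $ k))\<^sup>2) = (\<Sum>k\<in>UNIV. if k = i then a i else 0)"
    by (intro sum.cong) (auto simp: axis_def)
  then show ?thesis
    by (simp add: qform_udiag unitary_cadj_mult_column[OF assms])
qed

lemma unitary_mult_column_nonzero:
  assumes "unitary_mat U"
  shows "U *v axis i 1 \<noteq> 0"
  using unitary_cadj_mult_column[OF assms, of i] by (auto simp: axis_eq_0_iff)

lemma psd_udiag_iff:
  assumes "unitary_mat U"
  shows "psd_mat (udiag U a) \<longleftrightarrow> (\<forall>i. 0 \<le> a i)"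
proof
  assume "psd_mat (udiag U a)"
  then show "\<forall>i. 0 \<le> a i"
    using qform_udiag_column[OF assms] by (metis psd_mat_def Re_complex_of_real)
next
  assume "\<forall>i. 0 \<le> a i"
  then show "psd_mat (udiag U a)"
    by (simp add: psd_mat_def hermitian_udiag qform_udiag sum_nonneg)
qed

lemma pd_udiag_iff:
  assumes "unitary_mat U"
  shows "pd_mat (udiag U a) \<longleftrightarrow> (\<forall>i. 0 < a i)"
proof
  assume "pd_mat (udiag U a)"
  then show "\<forall>i. 0 < a i"
    using qform_udiag_column[OF assms] unitary_mult_column_nonzero[OF assms]
    by (metis pd_mat_def Re_complex_of_real)
next
  assume pos: "\<forall>i. 0 < a i"
  have "0 < (\<Sum>k\<in>UNIV. a k * (norm ((cadj U *v z) $ k))\<^sup>2)" if "z \<noteq> 0" for z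
  proof -
    have "cadj U *v z \<noteq> 0"
      using that assms by (metis matrix_vector_mul_assoc matrix_vector_mul_lid unitary_mat_def
          matrix_vector_mult_0_right)
    then obtain k where "(cadj U *v z) $ k \<noteq> 0"
      by (auto simp: vec_eq_iff)
    then have "0 < a k * (norm ((cadj U *v z) $ k))\<^sup>2"
      using pos by simp
    also have "\<dots> \<le> (\<Sum>k\<in>UNIV. a k * (norm ((cadj U *v z) $ k))\<^sup>2)"
      using pos by (intro member_le_sum) (simp_all add: less_imp_le)
    finally show ?thesis .
  qed
  then show "pd_mat (udiag U a)"
    by (simp add: pd_mat_def hermitian_udiag qform_udiag)
qed

lemma udiag_add: "udiag U a + udiag U b = udiag U (\<lambda>i. a i + b i)"
proof -
  have "diag_mat (\<lambda>i. complex_of_real (a i)) + diag_mat (\<lambda>i. complex_of_real (b i))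
      = diag_mat (\<lambda>i. complex_of_real (a i + b i))"
    by (simp add: diag_mat_def vec_eq_iff)
  then show ?thesis
    unfolding udiag_def by (simp only: flip: matrix_add_ldistrib matrix_add_rdistrib)
qed

lemma diag_mat_mult: "diag_mat p ** diag_mat q = diag_mat (\<lambda>i. p i * q i)"
proof -
  have "(\<Sum>k\<in>UNIV. (if i = k then p i else 0) * (if k = j then q k else 0))
      = (\<Sum>k\<in>UNIV. if k = i then (if i = j then p i * q i else 0) else 0)" for i j
    by (intro sum.cong) auto
  then show ?thesis
    by (simp add: matrix_matrix_mult_def diag_mat_def vec_eq_iff)
qed

lemma udiag_const:
  fixes U :: "complex^'n^'n"
  assumes "unitary_mat U"
  shows "udiag U (\<lambda>_. c) = mat (complex_of_real c)"
proof -
  have "diag_mat (\<lambda>_. complex_of_real c) = (c *\<^sub>R mat 1 :: complex^'n^'n)"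
    by (simp add: diag_mat_def mat_def vec_eq_iff) (simp add: scaleR_conv_of_real)
  then have "udiag U (\<lambda>_. c) = U ** (c *\<^sub>R mat 1) ** cadj U"
    by (simp add: udiag_def)
  also have "\<dots> = c *\<^sub>R (U ** cadj U)"
    by (simp add: matrix_scalar_ac scalar_matrix_assoc)
  also have "\<dots> = mat (complex_of_real c)"
    using assms by (simp add: unitary_mat_def mat_def vec_eq_iff) (simp add: scaleR_conv_of_real)
  finally show ?thesis .
qed

lemma udiag_diff_const:
  fixes U :: "complex^'n^'n"
  assumes "unitary_mat U"
  shows "udiag U a - mat (complex_of_real c) = udiag U (\<lambda>i. a i - c)"
    and "mat (complex_of_real c) - udiag U a = udiag U (\<lambda>i. c - a i)"
  using udiag_add[of U "\<lambda>i. a i - c" "\<lambda>_. c"] udiag_add[of U "\<lambda>i. c - a i" a]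
  by (simp_all add: udiag_const[OF assms] algebra_simps)

lemma loewner_le_udiag_iff:
  fixes U :: "complex^'n^'n"
  assumes "unitary_mat U"
  shows "loewner_le (mat (complex_of_real c)) (udiag U a) \<longleftrightarrow> (\<forall>i. c \<le> a i)"
    and "loewner_le (udiag U a) (mat (complex_of_real c)) \<longleftrightarrow> (\<forall>i. a i \<le> c)"
  by (simp_all add: loewner_le_def udiag_diff_const[OF assms] psd_udiag_iff[OF assms])

lemma det_udiag:
  fixes U :: "complex^'n^'n"
  assumes "unitary_mat U"
  shows "det (udiag U a) = complex_of_real (\<Prod>i\<in>UNIV. a i)"
proof -
  have "det (diag_mat (\<lambda>i. complex_of_real (a i))) = (\<Prod>i\<in>UNIV. complex_of_real (a i))"
    by (subst det_diagonal) (auto simp: diag_mat_def)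
  moreover have "det U * det (cadj U) = 1"
    using assms by (metis det_I det_mul unitary_mat_def)
  ultimately show ?thesis
    by (simp add: udiag_def det_mul algebra_simps)
qed

lemma det_root_udiag:
  fixes U :: "complex^'n^'n"
  assumes "unitary_mat U"
  shows "det_root (udiag U a) = (\<Prod>i\<in>UNIV. a i) powr (1 / real CARD('n))"
  by (simp only: det_root_def det_udiag[OF assms] Re_complex_of_real)

lemma hermitian_spectral_mat_fun:
  fixes A :: "complex^'n^'n"
  assumes "hermitian_mat A"
  obtains U a where "unitary_mat U" and "A = udiag U a"
    and "\<And>f. mat_fun f A = udiag U (\<lambda>i. f (a i))"
proof -
  define P where "P = (\<lambda>(U, d). unitary_mat U \<and> (\<forall>i. d i \<in> \<real>) \<and> A = U ** diag_mat d ** cadj U)"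
  obtain V b where "unitary_mat V" "A = udiag V b"
    using hermitian_spectral[OF assms] .
  then have "P (V, \<lambda>i. complex_of_real (b i))"
    by (simp add: P_def udiag_def)
  then have "P (SOME p. P p)"
    by (rule someI)
  moreover obtain U d where Ud: "(SOME p. P p) = (U, d)"
    by fastforce
  ultimately have "unitary_mat U" and "\<forall>i. d i \<in> \<real>" and "A = U ** diag_mat d ** cadj U"
    by (auto simp: P_def)
  moreover from \<open>\<forall>i. d i \<in> \<real>\<close> have "d = (\<lambda>i. complex_of_real (Re (d i)))"
    by (auto simp: fun_eq_iff)
  moreover have "mat_fun f A = udiag U (\<lambda>i. f (Re (d i)))" for f
    using Ud by (simp add: mat_fun_def udiag_def flip: P_def)
  ultimately show ?thesis
    by (intro that[of U "\<lambda>i. Re (d i)"]) (simp_all add: udiag_def)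
qed

section \<open>Minkowski's determinant inequality\<close>

lemma geom_mean_mono:
  fixes a b :: "'n::finite \<Rightarrow> real"
  assumes "\<And>i. 0 \<le> a i" and "\<And>i. a i \<le> b i"
  shows "(\<Prod>i\<in>UNIV. a i) powr (1 / real CARD('n)) \<le> (\<Prod>i\<in>UNIV. b i) powr (1 / real CARD('n))"
  using assms by (intro powr_mono2 prod_mono prod_nonneg) auto

lemma geom_mean_scale:
  fixes a :: "'n::finite \<Rightarrow> real"
  assumes "0 \<le> c" and "\<And>i. 0 \<le> a i"
  shows "(\<Prod>i\<in>UNIV. c * a i) powr (1 / real CARD('n)) = c * (\<Prod>i\<in>UNIV. a i) powr (1 / real CARD('n))"
proof -
  have "(c ^ CARD('n)) powr (1 / real CARD('n)) = c"
    using assms(1) by (simp add: powr_powr flip: powr_realpow')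
  then show ?thesis
    using assms by (simp add: prod.distrib powr_mult prod_nonneg)
qed

lemma one_add_geom_mean_le:
  fixes e :: "'n::finite \<Rightarrow> real"
  assumes e: "\<And>i. 0 \<le> e i"
  shows "1 + (\<Prod>i\<in>UNIV. e i) powr (1 / real CARD('n)) \<le> (\<Prod>i\<in>UNIV. 1 + e i) powr (1 / real CARD('n))"
proof -
  \<comment> \<open>AM-GM for \<open>1/(1 + e\<^sub>i)\<close> and for \<open>e\<^sub>i/(1 + e\<^sub>i)\<close>, whose arithmetic means add up to 1.\<close>
  let ?r = "1 / real CARD('n)"
  define P where "P = (\<Prod>i\<in>UNIV. 1 + e i)"
  have "0 < P"
    unfolding P_def using e by (intro prod_pos) (simp add: add_pos_nonneg)
  have "(\<Prod>i\<in>UNIV. 1 / (1 + e i)) powr ?r \<le> (\<Sum>i\<in>UNIV. 1 / (1 + e i) / real CARD('n))"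
    by (intro arith_geom_mean[where S = UNIV, simplified] divide_nonneg_nonneg)
      (simp_all add: e add_nonneg_nonneg)
  moreover have "(\<Prod>i\<in>UNIV. e i / (1 + e i)) powr ?r \<le> (\<Sum>i\<in>UNIV. e i / (1 + e i) / real CARD('n))"
    by (intro arith_geom_mean[where S = UNIV, simplified] divide_nonneg_nonneg)
      (simp_all add: e add_nonneg_nonneg)
  moreover have "(\<Sum>i\<in>UNIV. 1 / (1 + e i) / real CARD('n))
      + (\<Sum>i\<in>UNIV. e i / (1 + e i) / real CARD('n)) = 1"
  proof -
    have "1 / (1 + e i) / real CARD('n) + e i / (1 + e i) / real CARD('n) = 1 / real CARD('n)" for i
    proof -
      have "1 + e i \<noteq> 0"
        using e[of i] by linarith
      then show ?thesis
        by (simp flip: add_divide_distrib)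
    qed
    then show ?thesis
      by (simp flip: sum.distrib)
  qed
  moreover have "(\<Prod>i\<in>UNIV. 1 / (1 + e i)) powr ?r = 1 / P powr ?r"
    and "(\<Prod>i\<in>UNIV. e i / (1 + e i)) powr ?r = (\<Prod>i\<in>UNIV. e i) powr ?r / P powr ?r"
    using \<open>0 < P\<close> e by (simp_all add: P_def prod_dividef powr_divide prod_nonneg)
  ultimately have "(1 + (\<Prod>i\<in>UNIV. e i) powr ?r) / P powr ?r \<le> 1"
    by (simp add: add_divide_distrib)
  with \<open>0 < P\<close> have "1 + (\<Prod>i\<in>UNIV. e i) powr ?r \<le> P powr ?r"
    by (simp add: divide_le_eq)
  then show ?thesis
    by (simp only: P_def)
qed

lemma det_cadj: "det (cadj A) = cnj (det A)"
proof -
  have "cadj A = transpose (\<chi> i j. cnj (A $ i $ j))"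
    by (simp add: cadj_def transpose_def)
  then have "det (cadj A) = det (\<chi> i j. cnj (A $ i $ j))"
    by (simp only: det_transpose)
  then show ?thesis
    by (simp add: det_def cnj_sum cnj_prod)
qed

lemma det_congruence: "det (S ** Z ** cadj S) = complex_of_real ((cmod (det S))\<^sup>2) * det Z"
  unfolding complex_norm_square by (simp add: det_mul det_cadj algebra_simps)

lemma hermitian_congruence: "hermitian_mat Z \<Longrightarrow> hermitian_mat (S ** Z ** cadj S)"
  by (simp add: hermitian_mat_def cadj_mult matrix_mul_assoc)

lemma psd_congruence: "psd_mat Z \<Longrightarrow> psd_mat (S ** Z ** cadj S)"
  by (simp add: psd_mat_def hermitian_congruence flip: qform_congruence)

lemma psd_det:
  fixes Z :: "complex^'n^'n"
  assumes "psd_mat Z"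
  obtains r where "0 \<le> r" and "det Z = complex_of_real r"
proof -
  obtain U a where "unitary_mat U" and "Z = udiag U a"
    using hermitian_spectral assms psd_mat_def by metis
  then show ?thesis
    using assms by (intro that[of "\<Prod>i\<in>UNIV. a i"])
      (simp_all add: det_udiag psd_udiag_iff prod_nonneg)
qed

lemma det_root_congruence:
  fixes S Z :: "complex^'n^'n"
  assumes "psd_mat Z"
  shows "det_root (S ** Z ** cadj S) = ((cmod (det S))\<^sup>2) powr (1 / real CARD('n)) * det_root Z"
proof -
  obtain r where "0 \<le> r" and "det Z = complex_of_real r"
    using psd_det[OF assms] .
  then show ?thesis
    by (simp add: det_root_def det_congruence powr_mult)
qed

lemma one_add_det_root_le:
  fixes C :: "complex^'n^'n"
  assumes "psd_mat C"
  shows "1 + det_root C \<le> det_root (mat 1 + C)"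
proof -
  obtain U r where U: "unitary_mat U" and C: "C = udiag U r"
    using hermitian_spectral assms psd_mat_def by metis
  then have "\<forall>i. 0 \<le> r i"
    using assms psd_udiag_iff by blast
  moreover have "mat 1 + C = udiag U (\<lambda>i. 1 + r i)"
    using udiag_add[of U "\<lambda>_. 1" r] udiag_const[OF U, of 1] C by simp
  ultimately show ?thesis
    by (simp add: C det_root_udiag[OF U] one_add_geom_mean_le)
qed

lemma pd_factor:
  fixes X :: "complex^'n^'n"
  assumes "pd_mat X"
  obtains S T where "X = S ** cadj S" and "S ** T = mat 1"
proof -
  obtain U a where U: "unitary_mat U" and X: "X = udiag U a"
    using hermitian_spectral assms pd_mat_def by metis
  then have pos: "0 < a i" for i
    using assms pd_udiag_iff by blast
  define D where "D = diag_mat (\<lambda>i. complex_of_real (sqrt (a i)))"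
  define D' where "D' = diag_mat (\<lambda>i. complex_of_real (1 / sqrt (a i)))"
  have "U ** D ** cadj (U ** D) = U ** (D ** D) ** cadj U"
    by (simp add: D_def cadj_mult cadj_diag_mat matrix_mul_assoc)
  also have "\<dots> = X"
    using pos by (simp add: D_def diag_mat_mult X udiag_def abs_of_pos flip: of_real_mult)
  finally have "X = (U ** D) ** cadj (U ** D)" ..
  moreover have "(U ** D) ** (D' ** cadj U) = mat 1"
  proof -
    have "(U ** D) ** (D' ** cadj U) = U ** (D ** D') ** cadj U"
      by (simp add: matrix_mul_assoc)
    also have "\<dots> = mat 1"
      using pos udiag_const[OF U, of 1]
      by (simp add: D_def D'_def diag_mat_mult udiag_def less_imp_neq[OF pos, symmetric]
          flip: of_real_mult)
    finally show ?thesis .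
  qed
  ultimately show ?thesis
    by (rule that)
qed

lemma psd_add: "psd_mat A \<Longrightarrow> psd_mat B \<Longrightarrow> psd_mat (A + B)"
  by (simp add: psd_mat_def hermitian_mat_def cadj_add qform_add)

lemma psd_mat_one: "psd_mat (mat 1)"
  by (simp add: psd_mat_def hermitian_mat_def qform_eq_cinner cinner_self)

theorem minkowski_det_root:
  fixes X Y :: "complex^'n^'n"
  assumes "pd_mat X" and "psd_mat Y"
  shows "det_root X + det_root Y \<le> det_root (X + Y)"
proof -
  obtain S T where X: "X = S ** mat 1 ** cadj S" and "S ** T = mat 1"
    using pd_factor[OF assms(1)] by (metis matrix_mul_rid)
  define C where "C = T ** Y ** cadj T"
  have "psd_mat C"
    using assms(2) by (simp add: C_def psd_congruence)
  have "S ** C ** cadj S = (S ** T) ** Y ** cadj (S ** T)"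
    by (simp add: C_def cadj_mult matrix_mul_assoc)
  then have Y: "Y = S ** C ** cadj S"
    using \<open>S ** T = mat 1\<close> by simp
  have XY: "X + Y = S ** (mat 1 + C) ** cadj S"
    by (simp add: X Y matrix_add_ldistrib matrix_add_rdistrib)
  define d where "d = ((cmod (det S))\<^sup>2) powr (1 / real CARD('n))"
  have "det_root X = d"
    using det_root_congruence[OF psd_mat_one, of S] by (simp add: X d_def det_root_def)
  moreover have "det_root Y = d * det_root C"
    using det_root_congruence[OF \<open>psd_mat C\<close>, of S] by (simp add: Y d_def)
  moreover have "det_root (X + Y) = d * det_root (mat 1 + C)"
    using det_root_congruence[OF psd_add[OF psd_mat_one \<open>psd_mat C\<close>], of S]
    by (simp add: XY d_def)
  moreover have "d * (1 + det_root C) \<le> d * det_root (mat 1 + C)"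
    using one_add_det_root_le[OF \<open>psd_mat C\<close>] by (simp add: d_def mult_left_mono)
  ultimately show ?thesis
    by (simp add: algebra_simps)
qed

section \<open>Determinants of matrix functions\<close>

lemma convex_on_ratio_mono:
  fixes f :: "real \<Rightarrow> real"
  assumes "convex_on {0..} f" and "f 0 = 0" and "0 < x" and "x \<le> y"
  shows "f x / x \<le> f y / y"
proof -
  have "f ((1 - x / y) *\<^sub>R 0 + (x / y) *\<^sub>R y) \<le> (1 - x / y) * f 0 + (x / y) * f y"
    using assms by (intro convex_onD[OF assms(1)]) auto
  with assms show ?thesis
    by (simp add: field_simps)
qed

lemma concave_on_ratio_antimono:
  fixes f :: "real \<Rightarrow> real"
  assumes "concave_on {0..} f" and "f 0 = 0" and "0 < x" and "x \<le> y"
  shows "f y / y \<le> f x / x"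
  using convex_on_ratio_mono[of "\<lambda>x. - f x" x y] assms by (simp add: concave_on_def)

definition loewner_between :: "real \<Rightarrow> real \<Rightarrow> complex^'n^'n \<Rightarrow> bool" where
  "loewner_between m M A \<longleftrightarrow>
     hermitian_mat A \<and> loewner_le (mat (of_real m)) A \<and> loewner_le A (mat (of_real M))"

lemma loewner_between_spectral:
  fixes A :: "complex^'n^'n"
  assumes "loewner_between m M A"
  obtains U a where "unitary_mat U" and "A = udiag U a"
    and "\<And>f. mat_fun f A = udiag U (\<lambda>i. f (a i))" and "\<And>i. a i \<in> {m..M}"
proof -
  obtain U a where U: "unitary_mat U" and A: "A = udiag U a"
    and "\<And>f. mat_fun f A = udiag U (\<lambda>i. f (a i))"
    using hermitian_spectral_mat_fun assms loewner_between_def by metis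
  moreover have "a i \<in> {m..M}" for i
    using assms by (simp add: loewner_between_def A loewner_le_udiag_iff[OF U])
  ultimately show ?thesis
    using that by blast
qed

lemma det_root_mat_fun_le:
  fixes A :: "complex^'n^'n"
  assumes "loewner_between m M A" and "0 \<le> m" and "0 \<le> c"
    and f: "\<And>x. x \<in> {m..M} \<Longrightarrow> 0 \<le> f x \<and> f x \<le> c * x"
  shows "det_root (mat_fun f A) \<le> c * det_root A"
proof -
  obtain U a where "unitary_mat U" and "A = udiag U a"
    and "mat_fun f A = udiag U (\<lambda>i. f (a i))" and a: "\<And>i. a i \<in> {m..M}"
    using loewner_between_spectral[OF assms(1)] by metis
  moreover have "0 \<le> a i" for i
    using a[of i] \<open>0 \<le> m\<close> by simp
  moreover have "(\<Prod>i\<in>UNIV. f (a i)) powr (1 / real CARD('n))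
      \<le> (\<Prod>i\<in>UNIV. c * a i) powr (1 / real CARD('n))"
    using f a by (intro geom_mean_mono) auto
  ultimately show ?thesis
    using \<open>0 \<le> c\<close> by (simp add: det_root_udiag geom_mean_scale)
qed

lemma det_root_mat_fun_ge:
  fixes A :: "complex^'n^'n"
  assumes "loewner_between m M A" and "0 \<le> m" and "0 \<le> c"
    and f: "\<And>x. x \<in> {m..M} \<Longrightarrow> c * x \<le> f x"
  shows "c * det_root A \<le> det_root (mat_fun f A)"
proof -
  obtain U a where "unitary_mat U" and "A = udiag U a"
    and "mat_fun f A = udiag U (\<lambda>i. f (a i))" and a: "\<And>i. a i \<in> {m..M}"
    using loewner_between_spectral[OF assms(1)] by metis
  moreover have "0 \<le> a i" for i
    using a[of i] \<open>0 \<le> m\<close> by simp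
  moreover have "(\<Prod>i\<in>UNIV. c * a i) powr (1 / real CARD('n))
      \<le> (\<Prod>i\<in>UNIV. f (a i)) powr (1 / real CARD('n))"
    using f a \<open>0 \<le> c\<close> \<open>\<And>i. 0 \<le> a i\<close> by (intro geom_mean_mono) auto
  ultimately show ?thesis
    using \<open>0 \<le> c\<close> by (simp add: det_root_udiag geom_mean_scale)
qed

lemma pd_mat_fun:
  fixes A :: "complex^'n^'n"
  assumes "loewner_between m M A" and "\<And>x. x \<in> {m..M} \<Longrightarrow> 0 < f x"
  shows "pd_mat (mat_fun f A)"
proof -
  obtain U a where "unitary_mat U"
    and "mat_fun f A = udiag U (\<lambda>i. f (a i))" and "\<And>i. a i \<in> {m..M}"
    using loewner_between_spectral[OF assms(1)] by metis
  then show ?thesis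
    using assms(2) by (simp add: pd_udiag_iff)
qed

lemma pd_if_loewner_between:
  fixes A :: "complex^'n^'n"
  assumes "loewner_between m M A" and "0 < m"
  shows "pd_mat A"
proof -
  obtain U a where "unitary_mat U" and "A = udiag U a" and "\<And>i. a i \<in> {m..M}"
    using loewner_between_spectral[OF assms(1)] by metis
  then show ?thesis
    using \<open>0 < m\<close> by (force simp: pd_udiag_iff intro: less_le_trans)
qed

lemma pd_imp_psd:
  assumes "pd_mat A"
  shows "psd_mat A"
proof -
  have "0 \<le> Re (qform A x)" for x
    using assms by (cases "x = 0") (auto simp: pd_mat_def qform_def intro: less_imp_le)
  with assms show ?thesis
    by (simp add: pd_mat_def psd_mat_def)
qed

lemma det_root_mat_fun_add_le:
  fixes A B :: "complex^'n^'n"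
  assumes A: "loewner_between m M A" and B: "loewner_between m M B"
    and "0 < m" and "0 \<le> c" and f: "\<And>x. x \<in> {m..M} \<Longrightarrow> 0 \<le> f x \<and> f x \<le> c * x"
  shows "det_root (mat_fun f A) + det_root (mat_fun f B) \<le> c * det_root (A + B)"
proof -
  have "det_root (mat_fun f A) + det_root (mat_fun f B) \<le> c * det_root A + c * det_root B"
    using det_root_mat_fun_le[OF A _ \<open>0 \<le> c\<close> f] det_root_mat_fun_le[OF B _ \<open>0 \<le> c\<close> f] \<open>0 < m\<close>
    by (simp add: add_mono)
  also have "\<dots> \<le> c * det_root (A + B)"
    using minkowski_det_root[OF pd_if_loewner_between[OF A] pd_imp_psd[OF pd_if_loewner_between[OF B]]]
      \<open>0 < m\<close> \<open>0 \<le> c\<close>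
    by (simp flip: distrib_left add: mult_left_mono)
  finally show ?thesis .
qed

lemma det_root_mat_fun_add_ge:
  fixes A B :: "complex^'n^'n"
  assumes A: "loewner_between m M A" and B: "loewner_between m M B"
    and "0 < m" and "0 \<le> c" and f: "\<And>x. x \<in> {m..M} \<Longrightarrow> c * x \<le> f x"
  shows "c * (det_root A + det_root B) \<le> det_root (mat_fun f A + mat_fun f B)"
proof (cases "c = 0")
  case True
  then show ?thesis
    by (simp add: det_root_def)
next
  case False
  with \<open>0 \<le> c\<close> have "0 < c"
    by simp
  have "0 < f x" if "x \<in> {m..M}" for x
    using f[OF that] mult_pos_pos[OF \<open>0 < c\<close>, of x] that \<open>0 < m\<close> by auto
  then have "pd_mat (mat_fun f A)" and "pd_mat (mat_fun f B)"
    using A B pd_mat_fun by blast+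
  have "c * (det_root A + det_root B) \<le> det_root (mat_fun f A) + det_root (mat_fun f B)"
    using det_root_mat_fun_ge[OF A _ \<open>0 \<le> c\<close> f] det_root_mat_fun_ge[OF B _ \<open>0 \<le> c\<close> f] \<open>0 < m\<close>
    by (simp add: distrib_left add_mono)
  also have "\<dots> \<le> det_root (mat_fun f A + mat_fun f B)"
    using minkowski_det_root[OF \<open>pd_mat (mat_fun f A)\<close> pd_imp_psd[OF \<open>pd_mat (mat_fun f B)\<close>]] .
  finally show ?thesis .
qed

theorem theorem3p2:
  fixes m M :: real and A B :: "complex^'n^'n"
  assumes "0 < m" and "m < M"
    and "pd_mat A" and "pd_mat B"
    and "loewner_le (mat (complex_of_real m)) A" and "loewner_le A (mat (complex_of_real M))"
    and "loewner_le (mat (complex_of_real m)) B" and "loewner_le B (mat (complex_of_real M))"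
  shows "(\<forall>f :: real \<Rightarrow> real.
            (\<forall>x\<ge>0. 0 \<le> f x) \<and> f differentiable_on {0..} \<and> convex_on {0..} f \<and> f 0 = 0 \<longrightarrow>
              det_root (mat_fun f A) + det_root (mat_fun f B) \<le> f M / M * det_root (A + B) \<and>
              f m / m * (det_root A + det_root B) \<le> det_root (mat_fun f A + mat_fun f B))
       \<and> (\<forall>f :: real \<Rightarrow> real.
            (\<forall>x\<ge>0. 0 \<le> f x) \<and> f differentiable_on {0..} \<and> concave_on {0..} f \<and> f 0 = 0 \<longrightarrow>
              det_root (mat_fun f A) + det_root (mat_fun f B) \<le> f m / m * det_root (A + B) \<and>
              f M / M * (det_root A + det_root B) \<le> det_root (mat_fun f A + mat_fun f B))"
proof -
  have AB: "loewner_between m M A" "loewner_between m M B"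
    using assms by (simp_all add: loewner_between_def pd_mat_def)
  show ?thesis
  proof (intro conjI allI impI; elim conjE)
    fix f :: "real \<Rightarrow> real"
    assume nonneg: "\<forall>x\<ge>0. 0 \<le> f x" and "convex_on {0..} f" and "f 0 = 0"
    then have upper: "0 \<le> f x \<and> f x \<le> f M / M * x" and lower: "f m / m * x \<le> f x"
      if "x \<in> {m..M}" for x
      using that convex_on_ratio_mono[of f x M] convex_on_ratio_mono[of f m x] \<open>0 < m\<close>
      by (auto simp: field_simps)
    have "0 \<le> f M / M" and "0 \<le> f m / m"
      using nonneg assms(1,2) by simp_all
    then show "det_root (mat_fun f A) + det_root (mat_fun f B) \<le> f M / M * det_root (A + B)"
      and "f m / m * (det_root A + det_root B) \<le> det_root (mat_fun f A + mat_fun f B)"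
      using det_root_mat_fun_add_le[OF AB \<open>0 < m\<close> _ upper]
        det_root_mat_fun_add_ge[OF AB \<open>0 < m\<close> _ lower] by blast+
  next
    fix f :: "real \<Rightarrow> real"
    assume nonneg: "\<forall>x\<ge>0. 0 \<le> f x" and "concave_on {0..} f" and "f 0 = 0"
    then have upper: "0 \<le> f x \<and> f x \<le> f m / m * x" and lower: "f M / M * x \<le> f x"
      if "x \<in> {m..M}" for x
      using that concave_on_ratio_antimono[of f x M] concave_on_ratio_antimono[of f m x] \<open>0 < m\<close>
      by (auto simp: field_simps)
    have "0 \<le> f M / M" and "0 \<le> f m / m"
      using nonneg assms(1,2) by simp_all
    then show "det_root (mat_fun f A) + det_root (mat_fun f B) \<le> f m / m * det_root (A + B)"
      and "f M / M * (det_root A + det_root B) \<le> det_root (mat_fun f A + mat_fun f B)"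
      using det_root_mat_fun_add_le[OF AB \<open>0 < m\<close> _ upper]
        det_root_mat_fun_add_ge[OF AB \<open>0 < m\<close> _ lower] by blast+
  qed
qed

end
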